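(* Let $A\in\mathbb{R}_+^{n\times n}$ be irreducible and let $x>0$ be a Perron eigenvector of $A$. Then $$\rho(A)=\max_{B\in\Omega(A)}\rho(B)\iff\big(\forall\,1\le i,j,k\le n:\ x_k<x_j\Rightarrow a_{i,k}\le a_{i,j}\big),$$ and $$\rho(A)=\min_{B\in\Omega(A)}\rho(B)\iff\big(\forall\,1\le i,j,k\le n:\ x_k<x_j\Rightarrow a_{i,k}\ge a_{i,j}\big).$$
   Context: For $A=(a_{i,j})\in\mathbb{R}_+^{n\times n}$ (nonnegative $n\times n$ matrices), $\Omega(A)=\{B\in\mathbb{R}_+^{n\times n}:\ \forall i\ \exists\text{ a permutation }\phi_i\text{ of }\{1,\dots,n\}\text{ with } b_{i,j}=a_{i,\phi_i(j)}\ \forall j\}$. $\rho(B)$ denotes the spectral radius (Perron root) of $B$. A Perron eigenvector of $A$ is a nonzero nonnegative vector $x$ with $Ax=\rho(A)x$. *)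

theory Defs
  imports "Jordan_Normal_Form.Spectral_Radius" "HOL-Combinatorics.Permutations"
begin

text \<open>Nonnegative n x n real matrices are represented as \<open>real mat\<close> in
  \<open>carrier_mat n n\<close> with all entries \<open>\<ge> 0\<close>; indices run over \<open>{0..<n}\<close>.\<close>

definition nonneg_mat :: "real mat \<Rightarrow> bool" where
  "nonneg_mat A \<longleftrightarrow> (\<forall>i < dim_row A. \<forall>j < dim_col A. A $$ (i,j) \<ge> 0)"

definition rho :: "real mat \<Rightarrow> real" where
  "rho A = spectral_radius (map_mat complex_of_real A)"

definition irreducible_mat :: "real mat \<Rightarrow> bool" where
  "irreducible_mat A \<longleftrightarrow> (\<forall>i < dim_row A. \<forall>j < dim_row A. i \<noteq> j \<longrightarrow>
      (\<exists>k. (A ^\<^sub>m k) $$ (i,j) > 0))"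

definition Omega :: "real mat \<Rightarrow> real mat set" where
  "Omega A = {B. B \<in> carrier_mat (dim_row A) (dim_col A) \<and> nonneg_mat B \<and>
      (\<forall>i < dim_row A. \<exists>\<phi>. \<phi> permutes {..<dim_col A} \<and>
          (\<forall>j < dim_col A. B $$ (i,j) = A $$ (i, \<phi> j)))}"

definition perron_eigenvector :: "real mat \<Rightarrow> real vec \<Rightarrow> bool" where
  "perron_eigenvector A x \<longleftrightarrow> x \<in> carrier_vec (dim_col A) \<and> x \<noteq> 0\<^sub>v (dim_col A) \<and>
     (\<forall>i < dim_vec x. x $ i \<ge> 0) \<and> A *\<^sub>v x = rho A \<cdot>\<^sub>v x"

end

theory Submission
  imports Defs
begin

(* For B in Omega(A) the entry (B x)_i is the sum
  of the products of x with a permutation of row i of A, so the rearrangement inequality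
  gives B x <= rho(A) x whenever every row of A is ordered like x, and B x >= rho(A) x when
  every row is ordered oppositely; the Collatz-Wielandt bounds turn these into
  rho(B) <= rho(A), resp. rho(B) >= rho(A).  Conversely, if row i violates the ordering at
  columns j, k, exchanging these two entries of row i gives B in Omega(A) with B x - rho(A) x
  of constant sign and nonzero only in row i.  Since B agrees with the irreducible A outside
  row i, the deviation spreads to every row of some power B^N, so B^N x is strictly above
  (resp. below) rho(A)^N x and rho(B) differs from rho(A) in the forbidden direction. *)

section \<open>Matrix powers\<close>

lemma mult_mat_vec_index_sum:
  fixes M :: "'a::comm_semiring_0 mat"
  assumes "M \<in> carrier_mat m n" "v \<in> carrier_vec n" "l < m"
  shows "(M *\<^sub>v v) $ l = (\<Sum>q<n. M $$ (l,q) * v $ q)"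
  using assms by (auto simp: scalar_prod_def lessThan_atLeast0 intro!: sum.cong)

lemma pow_mat_Suc_index_sum:
  fixes M :: "'a::semiring_1 mat"
  assumes "M \<in> carrier_mat n n" "l < n" "q < n"
  shows "(M ^\<^sub>m Suc k) $$ (l,q) = (\<Sum>r<n. (M ^\<^sub>m k) $$ (l,r) * M $$ (r,q))"
  using assms by (auto simp: scalar_prod_def lessThan_atLeast0 intro!: sum.cong)

lemma pow_mat_add:
  fixes M :: "'a::semiring_1 mat"
  assumes M: "M \<in> carrier_mat n n"
  shows "M ^\<^sub>m (a + b) = M ^\<^sub>m a * M ^\<^sub>m b"
proof (induction b)
  case (Suc b)
  have "M ^\<^sub>m (a + Suc b) = (M ^\<^sub>m a * M ^\<^sub>m b) * M" using Suc by simp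
  also have "\<dots> = M ^\<^sub>m a * M ^\<^sub>m Suc b" using M by (simp add: assoc_mult_mat[of _ n n _ n _ n])
  finally show ?case .
qed (use M in simp)

lemma pow_mat_Suc_left:
  fixes M :: "'a::semiring_1 mat"
  assumes M: "M \<in> carrier_mat n n"
  shows "M ^\<^sub>m Suc p = M * M ^\<^sub>m p"
  using pow_mat_add[OF M, of 1 p] M by simp

lemma pow_mat_Suc_mult_mat_vec:
  fixes M :: "'a::semiring_1 mat"
  assumes M: "M \<in> carrier_mat n n" and v: "v \<in> carrier_vec n"
  shows "M ^\<^sub>m Suc k *\<^sub>v v = M *\<^sub>v (M ^\<^sub>m k *\<^sub>v v)"
  unfolding pow_mat_Suc_left[OF M] using M v by (simp add: assoc_mult_mat_vec[of _ n n _ n])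

lemma pow_mat_mult:
  fixes M :: "'a::semiring_1 mat"
  assumes M: "M \<in> carrier_mat n n"
  shows "M ^\<^sub>m (a * b) = (M ^\<^sub>m a) ^\<^sub>m b"
proof (induction b)
  case (Suc b)
  have "M ^\<^sub>m (a * Suc b) = M ^\<^sub>m (a * b) * M ^\<^sub>m a"
    using pow_mat_add[OF M, of "a * b" a] by (simp add: add.commute)
  then show ?case using Suc by simp
qed (use M in simp)

lemma smult_pow_mat:
  fixes M :: "'a::comm_ring_1 mat"
  assumes M: "M \<in> carrier_mat n n"
  shows "(a \<cdot>\<^sub>m M) ^\<^sub>m k = a ^ k \<cdot>\<^sub>m M ^\<^sub>m k"
proof (induction k)
  case (Suc k)
  then show ?case using M
    by (simp add: mult_smult_assoc_mat[of _ n n _ n] mult_smult_distrib[of _ n n _ n])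
      (rule eq_matI, auto)
qed (use M in auto)

lemma nonneg_mat_pow:
  assumes M: "M \<in> carrier_mat n n" and nn: "nonneg_mat M"
  shows "nonneg_mat (M ^\<^sub>m k)"
proof (induction k)
  case (Suc k)
  have "0 \<le> (M ^\<^sub>m Suc k) $$ (i,j)" if "i < n" "j < n" for i j
    using Suc nn M that unfolding pow_mat_Suc_index_sum[OF M that]
    by (auto simp: nonneg_mat_def intro!: sum_nonneg)
  then show ?case using M by (simp add: nonneg_mat_def)
qed (use M in \<open>auto simp: nonneg_mat_def\<close>)

section \<open>The rearrangement inequality\<close>

lemma ex_common_maximizer:
  fixes a x :: "'b \<Rightarrow> real"
  assumes "finite I" "I \<noteq> {}" and ord: "\<forall>j\<in>I. \<forall>k\<in>I. x k < x j \<longrightarrow> a k \<le> a j"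
  shows "\<exists>m\<in>I. \<forall>p\<in>I. x p \<le> x m \<and> a p \<le> a m"
proof -
  define I' where "I' = {j\<in>I. x j = Max (x ` I)}"
  have "Max (x ` I) \<in> x ` I" using assms(1,2) by simp
  then have I': "finite I'" "I' \<noteq> {}" using assms(1) unfolding I'_def by auto
  have "Max (a ` I') \<in> a ` I'" using I' by simp
  then obtain m where m: "m \<in> I'" "a m = Max (a ` I')" by auto
  have "x p \<le> x m \<and> a p \<le> a m" if p: "p \<in> I" for p
  proof (cases "x p < x m")
    case False
    then have "p \<in> I'" using m(1) p assms(1) unfolding I'_def by (auto intro: antisym)
    then have "a p \<le> a m" using m(2) I'(1) by simp
    moreover have "x p = x m" using \<open>p \<in> I'\<close> m(1) unfolding I'_def by simp
    ultimately show ?thesis by simp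
  qed (use ord p m(1) in \<open>auto simp: I'_def\<close>)
  moreover have "m \<in> I" using m(1) unfolding I'_def by simp
  ultimately show ?thesis by blast
qed

lemma rearrangement_inequality:
  fixes a x :: "'b \<Rightarrow> real"
  assumes "finite I" and "\<phi> permutes I" and "\<forall>j\<in>I. \<forall>k\<in>I. x k < x j \<longrightarrow> a k \<le> a j"
  shows "(\<Sum>j\<in>I. a (\<phi> j) * x j) \<le> (\<Sum>j\<in>I. a j * x j)"
  using assms
proof (induction "card I" arbitrary: I \<phi> rule: less_induct)
  case less
  note fin = less.prems(1) and perm = less.prems(2) and ord = less.prems(3)
  show ?case
  proof (cases "I = {}")
    case False
    obtain m where m: "m \<in> I" and top: "\<forall>p\<in>I. x p \<le> x m \<and> a p \<le> a m"
      using ex_common_maximizer[OF fin False ord] by blast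
    obtain q where q: "q \<in> I" "\<phi> q = m"
      using perm m by (metis permutes_def permutes_not_in)
    (* Redirect m to itself: since a m and x m are both maximal, this cannot decrease the sum. *)
    define \<psi> where "\<psi> = \<phi> \<circ> Transposition.transpose q m"
    have "\<psi> permutes I"
      unfolding \<psi>_def by (rule permutes_compose[OF permutes_swap_id[OF q(1) m] perm])
    moreover have \<psi>m: "\<psi> m = m" unfolding \<psi>_def using q by simp
    ultimately have \<psi>_perm: "\<psi> permutes (I - {m})"
      unfolding permutes_def by (metis Diff_iff singletonD)
    have exchange: "(\<Sum>j\<in>I. a (\<phi> j) * x j) \<le> (\<Sum>j\<in>I. a (\<psi> j) * x j)"
    proof (cases "q = m")
      case False
      have rest: "(\<Sum>j\<in>I - {q} - {m}. a (\<phi> j) * x j) = (\<Sum>j\<in>I - {q} - {m}. a (\<psi> j) * x j)"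
        unfolding \<psi>_def by (intro sum.cong) (auto simp: transpose_def)
      have "(\<Sum>j\<in>I. a (\<phi> j) * x j)
          = a m * x q + a (\<phi> m) * x m + (\<Sum>j\<in>I - {q} - {m}. a (\<phi> j) * x j)"
        using fin q m False by (simp add: sum.remove[of I q] sum.remove[of "I - {q}" m])
      moreover have "(\<Sum>j\<in>I. a (\<psi> j) * x j)
          = a (\<phi> m) * x q + a m * x m + (\<Sum>j\<in>I - {q} - {m}. a (\<psi> j) * x j)"
        using fin q m False by (simp add: sum.remove[of I q] sum.remove[of "I - {q}" m] \<psi>_def)
      moreover have "0 \<le> (a m - a (\<phi> m)) * (x m - x q)"
        using top q(1) m perm by (intro mult_nonneg_nonneg) (auto simp: permutes_in_image)
      ultimately show ?thesis using rest by (simp add: algebra_simps)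
    qed (simp add: \<psi>_def)
    have "(\<Sum>j\<in>I - {m}. a (\<psi> j) * x j) \<le> (\<Sum>j\<in>I - {m}. a j * x j)"
      using less.hyps[OF card_Diff1_less[OF fin m] _ \<psi>_perm] fin ord by simp
    then have "(\<Sum>j\<in>I. a (\<psi> j) * x j) \<le> (\<Sum>j\<in>I. a j * x j)"
      using fin m \<psi>m by (simp add: sum.remove[of I m])
    with exchange show ?thesis by linarith
  qed simp
qed

section \<open>Collatz-Wielandt bounds for the spectral radius\<close>

lemma ex_argmax_lessThan:
  fixes f :: "nat \<Rightarrow> real"
  assumes "0 < n"
  obtains l where "l < n" "\<And>q. q < n \<Longrightarrow> f q \<le> f l"
proof -
  have "Max (f ` {..<n}) \<in> f ` {..<n}" using assms by (intro Max_in) auto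
  then obtain l where "l < n" "f l = Max (f ` {..<n})" by auto
  then show ?thesis using that by simp
qed

lemma rho_eq_norm_eigenvalue:
  assumes "B \<in> carrier_mat n n" "0 < n"
  obtains \<mu> where "eigenvalue (map_mat complex_of_real B) \<mu>" "norm \<mu> = rho B"
  using spectral_radius_mem_max(1)[of "map_mat complex_of_real B" n] assms
  unfolding rho_def spectrum_def by auto

lemma rho_nonneg:
  assumes "B \<in> carrier_mat n n" "0 < n"
  shows "0 \<le> rho B"
  using rho_eq_norm_eigenvalue[OF assms] by (metis norm_ge_zero)

lemma norm_eigenvalue_le_rho:
  assumes B: "B \<in> carrier_mat n n" and ev: "eigenvalue (map_mat complex_of_real B) \<mu>"
  shows "norm \<mu> \<le> rho B"
proof -
  have Bc: "map_mat complex_of_real B \<in> carrier_mat n n" using B by simp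
  show ?thesis unfolding rho_def
    by (rule spectral_radius_mem_max(2)[OF Bc eigenvalue_imp_nonzero_dim[OF Bc ev]])
      (use ev in \<open>auto simp: spectrum_def\<close>)
qed

lemma norm_eigenvalue_le_of_subinvariant:
  fixes M :: "real mat"
  assumes M: "M \<in> carrier_mat n n" "nonneg_mat M"
    and x: "x \<in> carrier_vec n" "\<forall>i<n. 0 < x $ i"
    and sub: "\<forall>i<n. (M *\<^sub>v x) $ i \<le> s * x $ i"
    and ev: "eigenvalue (map_mat complex_of_real M) \<mu>"
  shows "norm \<mu> \<le> s"
proof -
  obtain v where v: "v \<in> carrier_vec n" "v \<noteq> 0\<^sub>v n"
    and Mv: "map_mat complex_of_real M *\<^sub>v v = \<mu> \<cdot>\<^sub>v v"
    using ev M unfolding eigenvalue_def eigenvector_def by auto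
  then obtain q0 where q0: "q0 < n" "v $ q0 \<noteq> 0" by (metis eq_vecI carrier_vecD index_zero_vec(1,2))
  obtain l where l: "l < n" and lmax: "\<And>q. q < n \<Longrightarrow> norm (v $ q) / x $ q \<le> norm (v $ l) / x $ l"
    using ex_argmax_lessThan[of n "\<lambda>q. norm (v $ q) / x $ q"] q0(1) by auto
  define \<tau> where "\<tau> = norm (v $ l) / x $ l"
  have v_le: "norm (v $ q) \<le> \<tau> * x $ q" if "q < n" for q
    using lmax[OF that] x(2) that by (simp add: \<tau>_def pos_divide_le_eq)
  have "0 < norm (v $ q0) / x $ q0" using q0 x(2) by simp
  then have \<tau>: "0 < \<tau>" using lmax[OF q0(1)] unfolding \<tau>_def by linarith
  have vl: "norm (v $ l) = \<tau> * x $ l" using x(2)[rule_format, OF l] unfolding \<tau>_def by simp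
  have "norm \<mu> * norm (v $ l) = norm ((map_mat complex_of_real M *\<^sub>v v) $ l)"
    using Mv v l by (simp add: norm_mult)
  also have "\<dots> = norm (\<Sum>q<n. complex_of_real (M $$ (l,q)) * v $ q)"
    using M v l by (subst mult_mat_vec_index_sum[of _ n n]) auto
  also have "\<dots> \<le> (\<Sum>q<n. norm (complex_of_real (M $$ (l,q)) * v $ q))"
    by (rule norm_sum)
  also have "\<dots> = (\<Sum>q<n. M $$ (l,q) * norm (v $ q))"
    using M l by (intro sum.cong) (auto simp: norm_mult nonneg_mat_def)
  also have "\<dots> \<le> (\<Sum>q<n. M $$ (l,q) * (\<tau> * x $ q))"
    using M l v_le by (intro sum_mono mult_left_mono) (auto simp: nonneg_mat_def)
  also have "\<dots> = \<tau> * (M *\<^sub>v x) $ l"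
    unfolding mult_mat_vec_index_sum[OF M(1) x(1) l] by (simp add: sum_distrib_left algebra_simps)
  also have "\<dots> \<le> \<tau> * (s * x $ l)" using sub l \<tau> by simp
  finally have "norm \<mu> * (\<tau> * x $ l) \<le> s * (\<tau> * x $ l)" unfolding vl by (simp add: algebra_simps)
  then show ?thesis using \<tau> x(2) l by simp
qed

lemma rho_pow_le_of_subinvariant:
  fixes B :: "real mat"
  assumes B: "B \<in> carrier_mat n n" "nonneg_mat B" and "0 < n"
    and x: "x \<in> carrier_vec n" "\<forall>i<n. 0 < x $ i"
    and sub: "\<forall>i<n. (B ^\<^sub>m N *\<^sub>v x) $ i \<le> s * x $ i"
  shows "rho B ^ N \<le> s"
proof -
  obtain \<mu> where ev: "eigenvalue (map_mat complex_of_real B) \<mu>" and \<mu>: "norm \<mu> = rho B"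
    using rho_eq_norm_eigenvalue[OF B(1) \<open>0 < n\<close>] .
  then obtain v where v: "eigenvector (map_mat complex_of_real B) v \<mu>"
    unfolding eigenvalue_def by blast
  have "map_mat complex_of_real (B ^\<^sub>m N) *\<^sub>v v = \<mu> ^ N \<cdot>\<^sub>v v"
    using eigenvector_pow[OF _ v, of n] B(1) by (simp add: of_real_hom.mat_hom_pow)
  then have "eigenvalue (map_mat complex_of_real (B ^\<^sub>m N)) (\<mu> ^ N)"
    using v B(1) unfolding eigenvalue_def eigenvector_def by auto
  from norm_eigenvalue_le_of_subinvariant
    [OF pow_carrier_mat[OF B(1)] nonneg_mat_pow[OF B] x sub this]
  show ?thesis by (simp add: norm_power \<mu>)
qed

lemma pow_mat_entries_bounded_of_rho_less:
  fixes B :: "real mat"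
  assumes B: "B \<in> carrier_mat n n" and n: "0 < n" and t: "rho B < t"
  obtains c where "\<And>k i j. i < n \<Longrightarrow> j < n \<Longrightarrow> \<bar>(B ^\<^sub>m k) $$ (i,j)\<bar> \<le> c * t ^ k"
proof -
  let ?Bc = "map_mat complex_of_real B"
  define C where "C = complex_of_real (1 / t) \<cdot>\<^sub>m ?Bc"
  have t0: "0 < t" using rho_nonneg[OF B n] t by linarith
  have Bc: "?Bc \<in> carrier_mat n n" and C: "C \<in> carrier_mat n n" using B by (auto simp: C_def)
  have "norm \<mu> < 1" if ev: "eigenvalue C \<mu>" for \<mu>
  proof -
    obtain v where v: "v \<in> carrier_vec n" "v \<noteq> 0\<^sub>v n" "C *\<^sub>v v = \<mu> \<cdot>\<^sub>v v"
      using ev C unfolding eigenvalue_def eigenvector_def by auto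
    have Bc_eq: "?Bc = complex_of_real t \<cdot>\<^sub>m C" using t0 B unfolding C_def by (auto intro!: eq_matI)
    have "?Bc *\<^sub>v v = complex_of_real t \<cdot>\<^sub>v (C *\<^sub>v v)"
      unfolding Bc_eq using v(1) C by (intro eq_vecI) auto
    also have "\<dots> = (complex_of_real t * \<mu>) \<cdot>\<^sub>v v" using v(3) by (simp add: smult_smult_assoc)
    finally have "?Bc *\<^sub>v v = (complex_of_real t * \<mu>) \<cdot>\<^sub>v v" .
    then have "eigenvalue ?Bc (complex_of_real t * \<mu>)"
      using v B unfolding eigenvalue_def eigenvector_def by auto
    from norm_eigenvalue_le_rho[OF B this] have "t * norm \<mu> \<le> rho B"
      using t0 by (simp add: norm_mult)
    then have "t * norm \<mu> < t * 1" using t by simp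
    then show ?thesis using t0 by (simp only: mult_less_cancel_left_pos)
  qed
  then have "spectral_radius C < 1"
    using spectral_radius_mem_max(1)[OF C n] by (auto simp: spectrum_def)
  then obtain c where c: "\<And>k. norm_bound (C ^\<^sub>m k) c"
    using spectral_radius_jnf_norm_bound_less_1_upper_triangular[OF C] by blast
  have "\<bar>(B ^\<^sub>m k) $$ (i,j)\<bar> \<le> c * t ^ k" if ij: "i < n" "j < n" for k i j
  proof -
    have "C ^\<^sub>m k = complex_of_real (1 / t) ^ k \<cdot>\<^sub>m map_mat complex_of_real (B ^\<^sub>m k)"
      unfolding C_def smult_pow_mat[OF Bc] of_real_hom.mat_hom_pow[OF B] ..
    then have "norm ((C ^\<^sub>m k) $$ (i,j)) = \<bar>(B ^\<^sub>m k) $$ (i,j)\<bar> / t ^ k"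
      using ij B t0 by (simp add: norm_mult norm_divide norm_power power_one_over)
    moreover have "norm ((C ^\<^sub>m k) $$ (i,j)) \<le> c"
      using c[of k] ij C unfolding norm_bound_def by simp
    ultimately show ?thesis using t0 by (simp add: divide_le_eq mult.commute)
  qed
  then show ?thesis using that by blast
qed

lemma superinvariant_pow:
  fixes M :: "real mat"
  assumes M: "M \<in> carrier_mat n n" "nonneg_mat M" and x: "x \<in> carrier_vec n" and s: "0 \<le> s"
    and sup: "\<forall>i<n. s * x $ i \<le> (M *\<^sub>v x) $ i"
  shows "\<forall>i<n. s ^ k * x $ i \<le> (M ^\<^sub>m k *\<^sub>v x) $ i"
proof (induction k)
  case (Suc k)
  show ?case
  proof (intro allI impI)
    fix i assume i: "i < n"
    have "s ^ Suc k * x $ i \<le> s ^ k * (M *\<^sub>v x) $ i"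
      using mult_left_mono[OF sup[rule_format, OF i], of "s ^ k"] s by (simp add: mult.left_commute)
    also have "\<dots> = (\<Sum>q<n. M $$ (i,q) * (s ^ k * x $ q))"
      unfolding mult_mat_vec_index_sum[OF M(1) x i] by (simp add: sum_distrib_left algebra_simps)
    also have "\<dots> \<le> (\<Sum>q<n. M $$ (i,q) * (M ^\<^sub>m k *\<^sub>v x) $ q)"
      using Suc M i by (intro sum_mono mult_left_mono) (auto simp: nonneg_mat_def)
    also have "\<dots> = (M ^\<^sub>m Suc k *\<^sub>v x) $ i"
      unfolding pow_mat_Suc_mult_mat_vec[OF M(1) x]
      by (rule mult_mat_vec_index_sum[OF M(1) mult_mat_vec_carrier[OF pow_carrier_mat[OF M(1)] x] i,
            symmetric])
    finally show "s ^ Suc k * x $ i \<le> (M ^\<^sub>m Suc k *\<^sub>v x) $ i" .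
  qed
qed (use M x in simp)

lemma ex_gt_pow_less:
  fixes a s :: real
  assumes "0 \<le> a" "a ^ N < s" "N \<noteq> 0"
  obtains t where "a < t" "t ^ N < s"
proof -
  define r where "r = root N s"
  have s: "0 < s" using assms by (meson le_less_trans zero_le_power)
  then have r: "r ^ N = s" "0 < r" using assms(3) by (simp_all add: r_def real_root_pow_pos2)
  then have "a < r" using assms(2) by (metis power_less_imp_less_base less_imp_le)
  then have "a < (a + r) / 2" "((a + r) / 2) ^ N < s"
    using assms(1,3) r by (auto intro!: power_strict_mono[of _ r, THEN order.strict_trans2])
  then show ?thesis using that by blast
qed

lemma rho_pow_ge_of_superinvariant:
  fixes B :: "real mat"
  assumes B: "B \<in> carrier_mat n n" "nonneg_mat B" and n: "0 < n"
    and x: "x \<in> carrier_vec n" "\<forall>i<n. 0 < x $ i"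
    and sup: "\<forall>i<n. s * x $ i \<le> (B ^\<^sub>m N *\<^sub>v x) $ i"
  shows "s \<le> rho B ^ N"
proof (rule ccontr)
  (* Otherwise pick t > rho B with t ^ N < s: then the entries of B ^ (N * k) x grow at least
    like s ^ k, but are bounded by a multiple of (t ^ N) ^ k. *)
  assume "\<not> s \<le> rho B ^ N"
  then have lt: "rho B ^ N < s" by simp
  have \<rho>: "0 \<le> rho B" using rho_nonneg[OF B(1) n] .
  have x0: "0 < x $ 0" using x(2) n by simp
  have s0: "0 \<le> s" using lt \<rho> by (meson le_less_trans zero_le_power less_imp_le)
  have "N \<noteq> 0"
  proof
    assume "N = 0"
    then have "s * x $ 0 \<le> x $ 0" using sup n x(1) B(1) by simp
    then show False using lt \<open>N = 0\<close> x0 by simp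
  qed
  then obtain t where t: "rho B < t" "t ^ N < s" using ex_gt_pow_less[OF \<rho> lt] by blast
  have t0: "0 < t" using t(1) \<rho> by linarith
  obtain c where c: "\<And>k i j. i < n \<Longrightarrow> j < n \<Longrightarrow> \<bar>(B ^\<^sub>m k) $$ (i,j)\<bar> \<le> c * t ^ k"
    using pow_mat_entries_bounded_of_rho_less[OF B(1) n t(1)] by blast
  define X where "X = (\<Sum>q<n. x $ q)"
  have "s ^ k * x $ 0 \<le> c * X * (t ^ N) ^ k" for k
  proof -
    have "s ^ k * x $ 0 \<le> (B ^\<^sub>m (N * k) *\<^sub>v x) $ 0"
      using superinvariant_pow[OF pow_carrier_mat[OF B(1)] nonneg_mat_pow[OF B] x(1) s0 sup] n
      by (simp add: pow_mat_mult[OF B(1)])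
    also have "\<dots> = (\<Sum>q<n. (B ^\<^sub>m (N * k)) $$ (0,q) * x $ q)"
      by (rule mult_mat_vec_index_sum[OF pow_carrier_mat[OF B(1)] x(1) n])
    also have "\<dots> \<le> (\<Sum>q<n. c * t ^ (N * k) * x $ q)"
      using c[OF n] x(2) by (intro sum_mono mult_right_mono) (auto dest: abs_le_D1)
    also have "\<dots> = c * X * (t ^ N) ^ k"
      by (simp add: X_def sum_distrib_left power_mult mult_ac)
    finally show ?thesis .
  qed
  then have "(s / t ^ N) ^ k \<le> c * X / x $ 0" for k
    using t0 x0 by (simp add: power_divide divide_simps mult_ac)
  moreover have "1 < s / t ^ N" using t t0 by simp
  ultimately show False using real_arch_pow[of "s / t ^ N" "c * X / x $ 0"] by (meson not_le)
qed

lemma ex_gt_factor_le: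
  fixes x y :: "nat \<Rightarrow> real"
  assumes "0 < n" "\<forall>i<n. 0 < x i" "\<forall>i<n. s * x i < y i"
  obtains s' where "s < s'" "\<forall>i<n. s' * x i \<le> y i"
proof -
  obtain l where l: "l < n" and lmin: "\<And>i. i < n \<Longrightarrow> y l / x l \<le> y i / x i"
    using ex_argmax_lessThan[of n "\<lambda>i. - (y i / x i)"] assms(1) by auto
  have "s < y l / x l" using assms(2,3) l by (simp add: pos_less_divide_eq)
  moreover have "\<forall>i<n. y l / x l * x i \<le> y i"
    using lmin assms(2) by (simp add: pos_le_divide_eq)
  ultimately show ?thesis using that by blast
qed

lemma rho_pow_gt_of_strictly_superinvariant:
  fixes B :: "real mat"
  assumes B: "B \<in> carrier_mat n n" "nonneg_mat B" and n: "0 < n"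
    and x: "x \<in> carrier_vec n" "\<forall>i<n. 0 < x $ i"
    and sup: "\<forall>i<n. s * x $ i < (B ^\<^sub>m N *\<^sub>v x) $ i"
  shows "s < rho B ^ N"
proof -
  obtain s' where "s < s'" "\<forall>i<n. s' * x $ i \<le> (B ^\<^sub>m N *\<^sub>v x) $ i"
    using ex_gt_factor_le[of n "\<lambda>i. x $ i"] n x(2) sup by blast
  with rho_pow_ge_of_superinvariant[OF B n x] show ?thesis by fastforce
qed

lemma rho_pow_lt_of_strictly_subinvariant:
  fixes B :: "real mat"
  assumes B: "B \<in> carrier_mat n n" "nonneg_mat B" and n: "0 < n"
    and x: "x \<in> carrier_vec n" "\<forall>i<n. 0 < x $ i"
    and sub: "\<forall>i<n. (B ^\<^sub>m N *\<^sub>v x) $ i < s * x $ i"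
  shows "rho B ^ N < s"
proof -
  obtain s' where "- s < s'" and s': "\<forall>i<n. s' * x $ i \<le> - (B ^\<^sub>m N *\<^sub>v x) $ i"
    using ex_gt_factor_le[of n "\<lambda>i. x $ i" "- s" "\<lambda>i. - (B ^\<^sub>m N *\<^sub>v x) $ i"] n x(2) sub
    by auto
  have "\<forall>i<n. (B ^\<^sub>m N *\<^sub>v x) $ i \<le> - s' * x $ i" using s' by fastforce
  then have "rho B ^ N \<le> - s'" by (rule rho_pow_le_of_subinvariant[OF B n x])
  with \<open>- s < s'\<close> show ?thesis by linarith
qed

section \<open>Spreading a strict inequality through an irreducible matrix\<close>

lemma irreducible_mat_closed_set:
  assumes A: "A \<in> carrier_mat n n" "nonneg_mat A" "irreducible_mat A"
    and i: "i < n" "P i"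
    and closed: "\<And>l q. l < n \<Longrightarrow> q < n \<Longrightarrow> l \<noteq> i \<Longrightarrow> 0 < A $$ (l,q) \<Longrightarrow> P q \<Longrightarrow> P l"
  shows "\<forall>l<n. P l"
proof -
  have walk: "\<forall>l<n. \<forall>q<n. 0 < (A ^\<^sub>m k) $$ (l,q) \<longrightarrow> P q \<longrightarrow> P l" for k
  proof (induction k)
    case (Suc k)
    show ?case
    proof (intro allI impI)
      fix l q assume l: "l < n" and q: "q < n" and pos: "0 < (A ^\<^sub>m Suc k) $$ (l,q)" and "P q"
      have "0 < (\<Sum>r<n. (A ^\<^sub>m k) $$ (l,r) * A $$ (r,q))"
        using pos unfolding pow_mat_Suc_index_sum[OF A(1) l q] .
      then obtain r where r: "r < n" and pos_r: "0 < (A ^\<^sub>m k) $$ (l,r) * A $$ (r,q)"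
        using sum_nonpos[of "{..<n}"] by (meson lessThan_iff not_le)
      moreover have "0 \<le> (A ^\<^sub>m k) $$ (l,r)" "0 \<le> A $$ (r,q)"
        using nonneg_mat_pow[OF A(1,2)] A l q r by (auto simp: nonneg_mat_def)
      ultimately have "0 < (A ^\<^sub>m k) $$ (l,r)" "0 < A $$ (r,q)"
        by (auto simp: zero_less_mult_iff)
      moreover have "P r" using closed[OF r q _ _ \<open>P q\<close>] i \<open>0 < A $$ (r,q)\<close> by blast
      ultimately show "P l" using Suc.IH l r by blast
    qed
  qed (use A(1) in auto)
  show ?thesis
  proof (intro allI impI)
    fix l assume l: "l < n"
    show "P l"
    proof (cases "l = i")
      case False
      then obtain k where "0 < (A ^\<^sub>m k) $$ (l,i)"
        using A(1,3) l i unfolding irreducible_mat_def by auto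
      then show ?thesis using walk l i by blast
    qed (use i in simp)
  qed
qed

lemma ex_uniform_index:
  fixes P :: "nat \<Rightarrow> nat \<Rightarrow> bool"
  assumes ex: "\<forall>l<n. \<exists>p. P p l" and step: "\<And>p l. l < n \<Longrightarrow> P p l \<Longrightarrow> P (Suc p) l"
  shows "\<exists>N. \<forall>l<n. P N l"
proof -
  obtain p where p: "\<forall>l<n. P (p l) l" using ex by metis
  have mono: "P p' l" if "l < n" "P p l" "p \<le> p'" for p p' l
    using that(3,2) by (induction p' rule: dec_induct) (use step that(1) in auto)
  have "P (Max (p ` {..<n})) l" if "l < n" for l
    using mono[OF that p[rule_format, OF that]] that by simp
  then show ?thesis by blast
qed

lemma pow_mat_vec_deviation_Suc:
  fixes B :: "real mat" and c \<rho> :: real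
  assumes B: "B \<in> carrier_mat n n" and x: "x \<in> carrier_vec n" and l: "l < n"
  defines "d p i \<equiv> c * ((B ^\<^sub>m p *\<^sub>v x) $ i - \<rho> ^ p * x $ i)"
  shows "d (Suc p) l = (\<Sum>q<n. B $$ (l,q) * d p q) + \<rho> ^ p * d 1 l"
    and "d (Suc p) l = \<rho> * d p l + (\<Sum>q<n. (B ^\<^sub>m p) $$ (l,q) * d 1 q)"
proof -
  have Bp: "B ^\<^sub>m p \<in> carrier_mat n n" using B by simp
  have Bpx: "B ^\<^sub>m p *\<^sub>v x \<in> carrier_vec n" and Bx: "B *\<^sub>v x \<in> carrier_vec n"
    using mult_mat_vec_carrier[OF Bp x] B x by auto
  have d1: "d 1 i = c * ((B *\<^sub>v x) $ i - \<rho> * x $ i)" for i using B unfolding d_def by simp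
  have "(B ^\<^sub>m Suc p *\<^sub>v x) $ l = (\<Sum>q<n. B $$ (l,q) * (B ^\<^sub>m p *\<^sub>v x) $ q)"
    unfolding pow_mat_Suc_mult_mat_vec[OF B x] by (rule mult_mat_vec_index_sum[OF B Bpx l])
  with mult_mat_vec_index_sum[OF B x l]
  show "d (Suc p) l = (\<Sum>q<n. B $$ (l,q) * d p q) + \<rho> ^ p * d 1 l"
    unfolding d1 d_def by (simp add: sum_subtractf sum_distrib_left algebra_simps)
  have "B ^\<^sub>m Suc p *\<^sub>v x = B ^\<^sub>m p *\<^sub>v (B *\<^sub>v x)"
    using B x by (simp add: assoc_mult_mat_vec[of _ n n _ n])
  then have "(B ^\<^sub>m Suc p *\<^sub>v x) $ l = (\<Sum>q<n. (B ^\<^sub>m p) $$ (l,q) * (B *\<^sub>v x) $ q)"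
    using mult_mat_vec_index_sum[OF Bp Bx l] by simp
  with mult_mat_vec_index_sum[OF Bp x l]
  show "d (Suc p) l = \<rho> * d p l + (\<Sum>q<n. (B ^\<^sub>m p) $$ (l,q) * d 1 q)"
    unfolding d1 d_def by (simp add: sum_subtractf sum_distrib_left algebra_simps)
qed

lemma pow_mat_vec_deviation_nonneg:
  fixes B :: "real mat" and c \<rho> :: real
  assumes B: "B \<in> carrier_mat n n" "nonneg_mat B" and x: "x \<in> carrier_vec n" and \<rho>: "0 \<le> \<rho>"
    and ge: "\<forall>l<n. 0 \<le> c * ((B *\<^sub>v x) $ l - \<rho> * x $ l)"
  shows "\<forall>l<n. 0 \<le> c * ((B ^\<^sub>m p *\<^sub>v x) $ l - \<rho> ^ p * x $ l)"
proof (induction p)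
  case (Suc p)
  show ?case
  proof (intro allI impI)
    fix l assume l: "l < n"
    have "0 \<le> (\<Sum>q<n. B $$ (l,q) * (c * ((B ^\<^sub>m p *\<^sub>v x) $ q - \<rho> ^ p * x $ q)))"
      using Suc B l by (auto simp: nonneg_mat_def intro!: sum_nonneg)
    moreover have "0 \<le> \<rho> ^ p * (c * ((B *\<^sub>v x) $ l - \<rho> * x $ l))" using ge l \<rho> by simp
    ultimately show "0 \<le> c * ((B ^\<^sub>m Suc p *\<^sub>v x) $ l - \<rho> ^ Suc p * x $ l)"
      using pow_mat_vec_deviation_Suc(1)[OF B(1) x l, where c = c and \<rho> = \<rho> and p = p] B(1) by simp
  qed
qed (use B(1) x in simp)

lemma pow_mat_vec_strict_of_row_strict:
  fixes A B :: "real mat"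
  assumes A: "A \<in> carrier_mat n n" "nonneg_mat A" "irreducible_mat A"
    and B: "B \<in> carrier_mat n n" "nonneg_mat B"
    and rows: "\<And>l q. l < n \<Longrightarrow> q < n \<Longrightarrow> l \<noteq> i \<Longrightarrow> B $$ (l,q) = A $$ (l,q)"
    and x: "x \<in> carrier_vec n" and \<rho>: "0 < \<rho>" and i: "i < n"
    and ge: "\<forall>l<n. 0 \<le> c * ((B *\<^sub>v x) $ l - \<rho> * x $ l)"
    and gt: "0 < c * ((B *\<^sub>v x) $ i - \<rho> * x $ i)"
  shows "\<exists>N. \<forall>l<n. 0 < c * ((B ^\<^sub>m N *\<^sub>v x) $ l - \<rho> ^ N * x $ l)"
  (* The sign c = 1 or c = -1 treats super- and subinvariant vectors x alike. *)
proof -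
  define e where "e p l = c * ((B ^\<^sub>m p *\<^sub>v x) $ l - \<rho> ^ p * x $ l)" for p l
  have e1: "e 1 l = c * ((B *\<^sub>v x) $ l - \<rho> * x $ l)" for l using B(1) by (simp add: e_def)
  note rec1 = pow_mat_vec_deviation_Suc(1)[OF B(1) x, where c = c and \<rho> = \<rho>, folded e_def]
    and rec2 = pow_mat_vec_deviation_Suc(2)[OF B(1) x, where c = c and \<rho> = \<rho>, folded e_def]
  have e1_nonneg: "0 \<le> e 1 l" if "l < n" for l using ge that e1 by simp
  have nonneg: "\<forall>l<n. 0 \<le> e p l" for p
    using pow_mat_vec_deviation_nonneg[OF B x _ ge] \<rho> unfolding e_def by simp
  have step: "0 < e (Suc p) l" if l: "l < n" and pos: "0 < e p l" for p l
  proof -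
    have "0 \<le> (\<Sum>q<n. (B ^\<^sub>m p) $$ (l,q) * e 1 q)"
      using nonneg_mat_pow[OF B] B(1) l e1_nonneg by (auto simp: nonneg_mat_def intro!: sum_nonneg)
    then show ?thesis using rec2[OF l, of p] \<rho> pos by (simp add: add_pos_nonneg)
  qed
  have edge: "0 < e (Suc p) l"
    if l: "l < n" and q: "q < n" and Blq: "0 < B $$ (l,q)" and pos: "0 < e p q" for p l q
  proof -
    have "0 < B $$ (l,q) * e p q" using Blq pos by simp
    also have "\<dots> \<le> (\<Sum>r<n. B $$ (l,r) * e p r)"
      using q B l nonneg by (intro member_le_sum) (auto simp: nonneg_mat_def)
    finally show ?thesis using rec1[OF l, of p] \<rho> e1_nonneg[OF l] by (simp add: add_pos_nonneg)
  qed
  have "\<forall>l<n. \<exists>p. 0 < e p l"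
  proof (rule irreducible_mat_closed_set[OF A i])
    show "\<exists>p. 0 < e p i" using gt e1[of i] by (intro exI[of _ 1]) simp
  next
    fix l q assume "l < n" "q < n" "l \<noteq> i" "0 < A $$ (l,q)" "\<exists>p. 0 < e p q"
    then show "\<exists>p. 0 < e p l" using edge rows by metis
  qed
  then show ?thesis using ex_uniform_index[of n "\<lambda>p l. 0 < e p l"] step unfolding e_def by blast
qed

section \<open>Row permutations\<close>

lemma self_in_Omega: "nonneg_mat A \<Longrightarrow> A \<in> Omega A"
  unfolding Omega_def by (auto intro!: exI[of _ id] permutes_id)

lemma Omega_carrier:
  assumes "A \<in> carrier_mat n n" "B \<in> Omega A"
  shows "B \<in> carrier_mat n n" "nonneg_mat B"
  using assms unfolding Omega_def by auto

lemma finite_Omega: "finite (Omega A)"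
proof -
  define D where "D = {..<dim_row A} \<times> {..<dim_col A}"
  define entries where "entries B = restrict (\<lambda>p. B $$ p) D" for B :: "real mat"
  have "entries ` Omega A \<subseteq> PiE D (\<lambda>_. (\<lambda>p. A $$ p) ` D)"
  proof clarify
    fix B assume B: "B \<in> Omega A"
    have "B $$ (l,j) \<in> (\<lambda>p. A $$ p) ` D" if lj: "l < dim_row A" "j < dim_col A" for l j
    proof -
      obtain \<phi> where "\<phi> permutes {..<dim_col A}" "B $$ (l,j) = A $$ (l, \<phi> j)"
        using B lj unfolding Omega_def by blast
      moreover from permutes_in_image[OF this(1), of j] have "(l, \<phi> j) \<in> D"
        using lj unfolding D_def by simp
      ultimately show ?thesis by simp
    qed
    then show "entries B \<in> PiE D (\<lambda>_. (\<lambda>p. A $$ p) ` D)" unfolding entries_def D_def by auto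
  qed
  then have "finite (entries ` Omega A)" by (rule finite_subset) (simp add: D_def finite_PiE)
  moreover have "inj_on entries (Omega A)"
  proof
    fix B B' assume "B \<in> Omega A" "B' \<in> Omega A" and eq: "entries B = entries B'"
    then have dims:
      "B \<in> carrier_mat (dim_row A) (dim_col A)" "B' \<in> carrier_mat (dim_row A) (dim_col A)"
      unfolding Omega_def by auto
    show "B = B'"
    proof (rule eq_matI)
      fix l j assume "l < dim_row B'" "j < dim_col B'"
      then have "(l,j) \<in> D" using dims unfolding D_def by auto
      then show "B $$ (l,j) = B' $$ (l,j)"
        using fun_cong[OF eq, of "(l,j)"] unfolding entries_def by simp
    qed (use dims in auto)
  qed
  ultimately show ?thesis by (rule finite_imageD)
qed

lemma mult_mat_vec_Omega:
  assumes A: "A \<in> carrier_mat n n" and B: "B \<in> Omega A" and x: "x \<in> carrier_vec n" and l: "l < n"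
  obtains \<phi> where "\<phi> permutes {..<n}" "(B *\<^sub>v x) $ l = (\<Sum>j<n. A $$ (l, \<phi> j) * x $ j)"
proof -
  obtain \<phi> where \<phi>: "\<phi> permutes {..<n}" "\<forall>j<n. B $$ (l,j) = A $$ (l, \<phi> j)"
    using A B l unfolding Omega_def by auto
  have "(B *\<^sub>v x) $ l = (\<Sum>j<n. A $$ (l, \<phi> j) * x $ j)"
    unfolding mult_mat_vec_index_sum[OF Omega_carrier(1)[OF A B] x l] using \<phi>(2) by simp
  with \<phi>(1) show ?thesis using that by blast
qed

definition swap_row_entries :: "'a mat \<Rightarrow> nat \<Rightarrow> nat \<Rightarrow> nat \<Rightarrow> 'a mat" where
  "swap_row_entries A i j k = mat (dim_row A) (dim_col A)
     (\<lambda>(r, c). if r = i then A $$ (i, Transposition.transpose j k c) else A $$ (r, c))"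

lemma swap_row_entries_in_Omega:
  assumes nn: "nonneg_mat A" and jk: "j < dim_col A" "k < dim_col A"
  shows "swap_row_entries A i j k \<in> Omega A"
proof -
  let ?B = "swap_row_entries A i j k" and ?\<tau> = "Transposition.transpose j k"
  have \<tau>: "?\<tau> permutes {..<dim_col A}" using jk by (auto intro: permutes_swap_id)
  have row: "\<exists>\<phi>. \<phi> permutes {..<dim_col A} \<and> (\<forall>c<dim_col A. ?B $$ (l,c) = A $$ (l, \<phi> c))"
    if "l < dim_row A" for l
  proof (cases "l = i")
    case True
    then show ?thesis using that \<tau> unfolding swap_row_entries_def by (intro exI[of _ ?\<tau>]) auto
  next
    case False
    then show ?thesis using that unfolding swap_row_entries_def by (intro exI[of _ id]) auto
  qed
  have "?\<tau> c < dim_col A" if "c < dim_col A" for c using that jk by (auto simp: transpose_def)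
  then have "nonneg_mat ?B" using nn unfolding nonneg_mat_def swap_row_entries_def by auto
  with row show ?thesis unfolding Omega_def by (simp add: swap_row_entries_def)
qed

lemma mult_mat_vec_swap_row_entries:
  fixes A :: "'a::comm_ring_1 mat"
  assumes A: "A \<in> carrier_mat n n" and x: "x \<in> carrier_vec n"
    and l: "l < n" and jk: "j < n" "k < n" "j \<noteq> k"
  shows "(swap_row_entries A i j k *\<^sub>v x) $ l
    = (A *\<^sub>v x) $ l + (if l = i then (A $$ (i,k) - A $$ (i,j)) * (x $ j - x $ k) else 0)"
proof -
  let ?B = "swap_row_entries A i j k"
  have B: "?B \<in> carrier_mat n n" using A unfolding swap_row_entries_def by simp
  define f where "f c = (?B $$ (l,c) - A $$ (l,c)) * x $ c" for c
  have "(?B *\<^sub>v x) $ l - (A *\<^sub>v x) $ l = (\<Sum>c<n. f c)"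
    unfolding mult_mat_vec_index_sum[OF B x l] mult_mat_vec_index_sum[OF A x l] f_def
    by (simp add: sum_subtractf algebra_simps)
  also have "\<dots> = f j + f k + (\<Sum>c\<in>{..<n} - {j} - {k}. f c)"
    using jk by (simp add: sum.remove[of "{..<n}" j] sum.remove[of "{..<n} - {j}" k])
  also have "(\<Sum>c\<in>{..<n} - {j} - {k}. f c) = 0"
    using A l unfolding f_def swap_row_entries_def by (intro sum.neutral) (auto simp: transpose_def)
  also have "f j + f k + 0 = (if l = i then (A $$ (i,k) - A $$ (i,j)) * (x $ j - x $ k) else 0)"
    using A l jk unfolding f_def swap_row_entries_def by (simp add: algebra_simps)
  finally show ?thesis by (simp add: algebra_simps)
qed

section \<open>Extremal spectral radius in Omega(A)\<close>

context
  fixes A :: "real mat" and x :: "real vec" and n :: nat and r :: real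
  assumes A: "A \<in> carrier_mat n n" "nonneg_mat A"
    and x: "x \<in> carrier_vec n" "\<forall>i<n. 0 < x $ i"
    and eigen: "A *\<^sub>v x = r \<cdot>\<^sub>v x"
    and n: "0 < n"
begin

lemma eigen_row_sum: "l < n \<Longrightarrow> (\<Sum>j<n. A $$ (l,j) * x $ j) = r * x $ l"
  using arg_cong[OF eigen, of "\<lambda>v. v $ l"] x(1) by (simp add: mult_mat_vec_index_sum[OF A(1) x(1)])

lemma eigenvalue_pos_of_pos_entry:
  assumes "i < n" "k < n" "0 < A $$ (i,k)"
  shows "0 < r"
proof -
  have "0 < A $$ (i,k) * x $ k" using assms x(2) by simp
  also have "\<dots> \<le> (\<Sum>j<n. A $$ (i,j) * x $ j)"
    using assms A x(2) by (intro member_le_sum) (auto simp: nonneg_mat_def less_imp_le)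
  also have "\<dots> = r * x $ i" by (rule eigen_row_sum[OF assms(1)])
  finally show ?thesis using x(2)[rule_format, OF assms(1)] by (simp add: zero_less_mult_iff)
qed

lemma rho_Omega_le_of_similarly_ordered:
  assumes ord: "\<forall>i<n. \<forall>j<n. \<forall>k<n. x $ k < x $ j \<longrightarrow> A $$ (i,k) \<le> A $$ (i,j)"
    and B: "B \<in> Omega A"
  shows "rho B \<le> r"
proof -
  note Bc = Omega_carrier[OF A(1) B]
  have "(B ^\<^sub>m 1 *\<^sub>v x) $ l \<le> r * x $ l" if l: "l < n" for l
  proof -
    obtain \<phi> where \<phi>: "\<phi> permutes {..<n}" "(B *\<^sub>v x) $ l = (\<Sum>j<n. A $$ (l, \<phi> j) * x $ j)"
      using mult_mat_vec_Omega[OF A(1) B x(1) l] .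
    have "(\<Sum>j<n. A $$ (l, \<phi> j) * x $ j) \<le> (\<Sum>j<n. A $$ (l,j) * x $ j)"
      using rearrangement_inequality[of "{..<n}" \<phi> "\<lambda>j. x $ j" "\<lambda>j. A $$ (l,j)"] \<phi>(1) ord l by auto
    then show ?thesis using \<phi>(2) eigen_row_sum[OF l] Bc(1) by simp
  qed
  then show ?thesis using rho_pow_le_of_subinvariant[OF Bc n x, of 1 r] by simp
qed

lemma rho_Omega_ge_of_oppositely_ordered:
  assumes ord: "\<forall>i<n. \<forall>j<n. \<forall>k<n. x $ k < x $ j \<longrightarrow> A $$ (i,j) \<le> A $$ (i,k)"
    and B: "B \<in> Omega A"
  shows "r \<le> rho B"
proof -
  note Bc = Omega_carrier[OF A(1) B]
  have "r * x $ l \<le> (B ^\<^sub>m 1 *\<^sub>v x) $ l" if l: "l < n" for l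
  proof -
    obtain \<phi> where \<phi>: "\<phi> permutes {..<n}" "(B *\<^sub>v x) $ l = (\<Sum>j<n. A $$ (l, \<phi> j) * x $ j)"
      using mult_mat_vec_Omega[OF A(1) B x(1) l] .
    have "(\<Sum>j<n. - A $$ (l, \<phi> j) * x $ j) \<le> (\<Sum>j<n. - A $$ (l,j) * x $ j)"
      using rearrangement_inequality[of "{..<n}" \<phi> "\<lambda>j. x $ j" "\<lambda>j. - A $$ (l,j)"] \<phi>(1) ord l
      by auto
    then show ?thesis using \<phi>(2) eigen_row_sum[OF l] Bc(1) by (simp add: sum_negf)
  qed
  then show ?thesis using rho_pow_ge_of_superinvariant[OF Bc n x, of r 1] by simp
qed

lemma swap_row_entries_deviation:
  assumes "l < n" "j < n" "k < n" "j \<noteq> k"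
  shows "(swap_row_entries A i j k *\<^sub>v x) $ l - r * x $ l
    = (if l = i then (A $$ (i,k) - A $$ (i,j)) * (x $ j - x $ k) else 0)"
  using mult_mat_vec_swap_row_entries[OF A(1) x(1) assms, where i = i] eigen x(1) assms(1) by simp

lemma ex_Omega_rho_gt:
  assumes irr: "irreducible_mat A"
    and ijk: "i < n" "j < n" "k < n" "x $ k < x $ j" "A $$ (i,j) < A $$ (i,k)"
  shows "\<exists>B\<in>Omega A. r < rho B"
proof -
  let ?B = "swap_row_entries A i j k"
  have jk: "j \<noteq> k" using ijk(4) by auto
  have B: "?B \<in> Omega A" using swap_row_entries_in_Omega[OF A(2)] A(1) ijk(2,3) by simp
  note Bc = Omega_carrier[OF A(1) B]
  have rows: "?B $$ (l,q) = A $$ (l,q)" if "l < n" "q < n" "l \<noteq> i" for l q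
    using that A(1) by (simp add: swap_row_entries_def)
  note dev = swap_row_entries_deviation[OF _ ijk(2,3) jk, where i = i]
  have "0 \<le> A $$ (i,j)" using A ijk(1,2) by (simp add: nonneg_mat_def)
  then have r: "0 < r" using eigenvalue_pos_of_pos_entry[OF ijk(1,3)] ijk(5) by simp
  have \<delta>: "0 < (A $$ (i,k) - A $$ (i,j)) * (x $ j - x $ k)" using ijk(4,5) by simp
  have "\<forall>l<n. 0 \<le> 1 * ((?B *\<^sub>v x) $ l - r * x $ l)" using dev \<delta> by simp
  moreover have "0 < 1 * ((?B *\<^sub>v x) $ i - r * x $ i)" using dev[OF ijk(1)] \<delta> by simp
  ultimately obtain N where "\<forall>l<n. 0 < 1 * ((?B ^\<^sub>m N *\<^sub>v x) $ l - r ^ N * x $ l)"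
    using pow_mat_vec_strict_of_row_strict[OF A irr Bc rows x(1) r ijk(1)] by blast
  then have "r ^ N < rho ?B ^ N" by (intro rho_pow_gt_of_strictly_superinvariant[OF Bc n x]) auto
  then have "r < rho ?B" using rho_nonneg[OF Bc(1) n] by (meson power_less_imp_less_base)
  with B show ?thesis by blast
qed

lemma ex_Omega_rho_lt:
  assumes irr: "irreducible_mat A"
    and ijk: "i < n" "j < n" "k < n" "x $ k < x $ j" "A $$ (i,k) < A $$ (i,j)"
  shows "\<exists>B\<in>Omega A. rho B < r"
proof -
  let ?B = "swap_row_entries A i j k"
  have jk: "j \<noteq> k" using ijk(4) by auto
  have B: "?B \<in> Omega A" using swap_row_entries_in_Omega[OF A(2)] A(1) ijk(2,3) by simp
  note Bc = Omega_carrier[OF A(1) B]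
  have rows: "?B $$ (l,q) = A $$ (l,q)" if "l < n" "q < n" "l \<noteq> i" for l q
    using that A(1) by (simp add: swap_row_entries_def)
  note dev = swap_row_entries_deviation[OF _ ijk(2,3) jk, where i = i]
  have "0 \<le> A $$ (i,k)" using A ijk(1,3) by (simp add: nonneg_mat_def)
  then have r: "0 < r" using eigenvalue_pos_of_pos_entry[OF ijk(1,2)] ijk(5) by simp
  have \<delta>: "(A $$ (i,k) - A $$ (i,j)) * (x $ j - x $ k) < 0"
    using ijk(4,5) by (simp add: mult_neg_pos)
  have "\<forall>l<n. 0 \<le> - 1 * ((?B *\<^sub>v x) $ l - r * x $ l)" using dev \<delta> by simp
  moreover have "0 < - 1 * ((?B *\<^sub>v x) $ i - r * x $ i)" using dev[OF ijk(1)] \<delta> by simp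
  ultimately obtain N where "\<forall>l<n. 0 < - 1 * ((?B ^\<^sub>m N *\<^sub>v x) $ l - r ^ N * x $ l)"
    using pow_mat_vec_strict_of_row_strict[OF A irr Bc rows x(1) r ijk(1)] by blast
  then have "rho ?B ^ N < r ^ N" by (intro rho_pow_lt_of_strictly_subinvariant[OF Bc n x]) auto
  then have "rho ?B < r" using r by (meson power_less_imp_less_base less_imp_le)
  with B show ?thesis by blast
qed

end

theorem theorem3p4:
  fixes A :: "real mat" and x :: "real vec" and n :: nat
  assumes "A \<in> carrier_mat n n"
    and "nonneg_mat A"
    and "irreducible_mat A"
    and "perron_eigenvector A x"
    and "\<forall>i < n. x $ i > 0"
  shows "(rho A = Max (rho ` Omega A) \<longleftrightarrow>
           (\<forall>i < n. \<forall>j < n. \<forall>k < n. x $ k < x $ j \<longrightarrow> A $$ (i,k) \<le> A $$ (i,j)))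
       \<and> (rho A = Min (rho ` Omega A) \<longleftrightarrow>
           (\<forall>i < n. \<forall>j < n. \<forall>k < n. x $ k < x $ j \<longrightarrow> A $$ (i,k) \<ge> A $$ (i,j)))"
proof -
  have x: "x \<in> carrier_vec n" and "x \<noteq> 0\<^sub>v n" and eigen: "A *\<^sub>v x = rho A \<cdot>\<^sub>v x"
    using assms(1,4) unfolding perron_eigenvector_def by auto
  then have n: "0 < n" by (metis carrier_vecD eq_vecI gr0I index_zero_vec(2) less_zeroE)
  note ctx = assms(1,2) x assms(5) eigen n
  have fin: "finite (rho ` Omega A)" using finite_Omega by simp
  have self: "A \<in> Omega A" by (rule self_in_Omega[OF assms(2)])
  have "rho A = Max (rho ` Omega A) \<longleftrightarrow> (\<forall>B\<in>Omega A. rho B \<le> rho A)"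
    using fin self by (auto intro!: Max_eqI[symmetric] simp: Max_ge)
  also have "\<dots> \<longleftrightarrow> (\<forall>i < n. \<forall>j < n. \<forall>k < n. x $ k < x $ j \<longrightarrow> A $$ (i,k) \<le> A $$ (i,j))"
    using rho_Omega_le_of_similarly_ordered[OF ctx] ex_Omega_rho_gt[OF ctx assms(3)]
    by (meson not_le)
  moreover have "rho A = Min (rho ` Omega A) \<longleftrightarrow> (\<forall>B\<in>Omega A. rho A \<le> rho B)"
    using fin self by (auto intro!: Min_eqI[symmetric] simp: Min_le)
  moreover have "\<dots> \<longleftrightarrow> (\<forall>i < n. \<forall>j < n. \<forall>k < n. x $ k < x $ j \<longrightarrow> A $$ (i,k) \<ge> A $$ (i,j))"
    using rho_Omega_ge_of_oppositely_ordered[OF ctx] ex_Omega_rho_lt[OF ctx assms(3)]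
    by (meson not_le)
  ultimately show ?thesis by blast
qed

end
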